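(* Let $\widehat\rho:\mathrm{U}(1)\times\mathrm{SU}(2)\to\mathrm{U}(2)$, $(z,A)\mapsto zA$ (a double cover with kernel $\{(1,I_2),(-1,-I_2)\}$). For every group automorphism $\tau$ of $\mathrm{U}(2)$ there is a unique automorphism $\widetilde\tau$ of $\mathrm{U}(1)\times\mathrm{SU}(2)$ such that $\widehat\rho\circ\widetilde\tau=\tau\circ\widehat\rho$.
   Context: $\mathrm{U}(1)=\{z\in\mathbb C\mid |z|=1\}$, identified with the scalar matrices $zI_2$ in $\mathrm{U}(2)$; automorphisms are abstract group automorphisms. *)

theory Defs
  imports "HOL-Analysis.Analysis" "HOL-Algebra.Algebra"
begin

type_synonym cmat2 = "complex^2^2"

definition cadj :: "cmat2 \<Rightarrow> cmat2" where
  "cadj A = (\<chi> i j. cnj (A $ j $ i))"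

definition U2_set :: "cmat2 set" where
  "U2_set = {A. cadj A ** A = mat 1}"

definition SU2_set :: "cmat2 set" where
  "SU2_set = {A. A \<in> U2_set \<and> det A = 1}"

definition U1_set :: "complex set" where
  "U1_set = {z. norm z = 1}"

definition U2_grp :: "cmat2 monoid" where
  "U2_grp = \<lparr>carrier = U2_set, mult = (**), one = mat 1\<rparr>"

definition SU2_grp :: "cmat2 monoid" where
  "SU2_grp = \<lparr>carrier = SU2_set, mult = (**), one = mat 1\<rparr>"

definition U1_grp :: "complex monoid" where
  "U1_grp = \<lparr>carrier = U1_set, mult = (*), one = 1\<rparr>"

definition U1xSU2 :: "(complex \<times> cmat2) monoid" where
  "U1xSU2 = U1_grp \<times>\<times> SU2_grp"

definition rho_hat :: "complex \<times> cmat2 \<Rightarrow> cmat2" where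
  "rho_hat p = mat (fst p) ** snd p"

end

(*
  An automorphism tau of U(2) preserves the centre, which consists of the scalars z I with
  z in U(1), and the set of commutators, which is SU(2): commutators have determinant 1, and
  conversely every A in SU(2) is unitarily conjugate to diag(l, cnj l), which is the commutator
  of diag(m, cnj m) and [[0,-1],[1,0]] for m^2 = l.  So tau restricts to automorphisms w of U(1)
  and of SU(2), and (z, A) |-> (w z, tau A) lifts tau through rho_hat.
  Two lifts sigma, sigma' agree up to the map p |-> fst (sigma p) / fst (sigma' p), which is
  multiplicative and squares to 1 because det (z A) = z^2 for A in SU(2).  Such a map is trivial
  on squares and on commutators, and every (z, A) is the square of (sqrt z, I) times (1, A),
  a commutator; hence the lifts coincide.
*)

theory Submission
  imports Defs
begin

definition center :: "('a, 'b) monoid_scheme \<Rightarrow> 'a set" where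
  "center G = {z \<in> carrier G. \<forall>x \<in> carrier G. z \<otimes>\<^bsub>G\<^esub> x = x \<otimes>\<^bsub>G\<^esub> z}"

lemma (in group_hom) image_derived_set:
  assumes "K \<subseteq> carrier G"
  shows "h ` derived_set G K = derived_set H (h ` K)"
proof -
  have "h (k1 \<otimes> k2 \<otimes> inv k1 \<otimes> inv k2)
      = h k1 \<otimes>\<^bsub>H\<^esub> h k2 \<otimes>\<^bsub>H\<^esub> inv\<^bsub>H\<^esub> h k1 \<otimes>\<^bsub>H\<^esub> inv\<^bsub>H\<^esub> h k2"
    if "k1 \<in> K" "k2 \<in> K" for k1 k2
    using that assms by (simp add: subset_iff)
  then show ?thesis
    by (auto simp: image_UN)
qed

lemma (in monoid) iso_image_center:
  assumes "\<phi> \<in> iso G H"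
  shows "\<phi> ` center G = center H"
proof -
  have hom: "\<phi> (x \<otimes> y) = \<phi> x \<otimes>\<^bsub>H\<^esub> \<phi> y" if "x \<in> carrier G" "y \<in> carrier G" for x y
    using assms that by (simp add: iso_def hom_def)
  have onto: "\<phi> ` carrier G = carrier H" and inj: "inj_on \<phi> (carrier G)"
    using assms by (simp_all add: iso_iff)
  have "\<phi> z \<in> center H \<longleftrightarrow> z \<in> center G" if z: "z \<in> carrier G" for z
  proof -
    have "\<phi> z \<otimes>\<^bsub>H\<^esub> \<phi> x = \<phi> x \<otimes>\<^bsub>H\<^esub> \<phi> z \<longleftrightarrow> z \<otimes> x = x \<otimes> z" if "x \<in> carrier G" for x
      using z that hom inj by (metis inj_onD m_closed)
    then show ?thesis
      using z onto by (auto simp: center_def simp flip: onto)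
  qed
  moreover have "center G \<subseteq> carrier G" "center H \<subseteq> \<phi> ` carrier G"
    using onto by (auto simp: center_def)
  ultimately show ?thesis
    by (auto 4 3)
qed

lemma iso_restrict_invariant:
  assumes "\<phi> \<in> iso G G" and "S \<subseteq> carrier G" and "\<phi> ` S = S"
  shows "\<phi> \<in> iso (G\<lparr>carrier := S\<rparr>) (G\<lparr>carrier := S\<rparr>)"
  using assms inj_on_subset[of \<phi> "carrier G" S]
  by (auto simp: iso_iff hom_def subset_iff)

lemma DirProd_iso:
  assumes "f \<in> iso G G'" and "g \<in> iso H H'"
  shows "map_prod f g \<in> iso (G \<times>\<times> H) (G' \<times>\<times> H')"
  using assms bij_betw_map_prod[of f "carrier G" "carrier G'" g "carrier H" "carrier H'"]
  by (auto simp: iso_def hom_def)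

lemma DirProd_derived_set:
  assumes "group G" and "group H"
  shows "{\<one>\<^bsub>G\<^esub>} \<times> derived_set H (carrier H) \<subseteq> derived_set (G \<times>\<times> H) (carrier (G \<times>\<times> H))"
proof clarify
  interpret G: group G by fact
  interpret H: group H by fact
  fix k1 k2 assume k: "k1 \<in> carrier H" "k2 \<in> carrier H"
  let ?x = "(\<one>\<^bsub>G\<^esub>, k1)" and ?y = "(\<one>\<^bsub>G\<^esub>, k2)"
  have "(\<one>\<^bsub>G\<^esub>, k1 \<otimes>\<^bsub>H\<^esub> k2 \<otimes>\<^bsub>H\<^esub> inv\<^bsub>H\<^esub> k1 \<otimes>\<^bsub>H\<^esub> inv\<^bsub>H\<^esub> k2)
      = ?x \<otimes>\<^bsub>G \<times>\<times> H\<^esub> ?y \<otimes>\<^bsub>G \<times>\<times> H\<^esub> inv\<^bsub>G \<times>\<times> H\<^esub> ?x \<otimes>\<^bsub>G \<times>\<times> H\<^esub> inv\<^bsub>G \<times>\<times> H\<^esub> ?y"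
    using assms k by simp
  moreover have "?x \<in> carrier (G \<times>\<times> H)" "?y \<in> carrier (G \<times>\<times> H)"
    using k by simp_all
  ultimately show "(\<one>\<^bsub>G\<^esub>, k1 \<otimes>\<^bsub>H\<^esub> k2 \<otimes>\<^bsub>H\<^esub> inv\<^bsub>H\<^esub> k1 \<otimes>\<^bsub>H\<^esub> inv\<^bsub>H\<^esub> k2)
      \<in> derived_set (G \<times>\<times> H) (carrier (G \<times>\<times> H))"
    by blast
qed

lemma (in group) involutive_character_trivial:
  fixes e :: "'a \<Rightarrow> 'c :: comm_monoid_mult"
  assumes mult: "\<And>x y. x \<in> carrier G \<Longrightarrow> y \<in> carrier G \<Longrightarrow> e (x \<otimes> y) = e x * e y"
    and square: "\<And>x. x \<in> carrier G \<Longrightarrow> e x * e x = 1"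
    and y: "y \<in> carrier G" and c: "c \<in> derived_set G (carrier G)"
  shows "e (y \<otimes> y \<otimes> c) = 1"
proof -
  have "e \<one> = 1"
    using mult[of \<one> \<one>] square[of \<one>] by simp
  then have inv: "e x * e (inv x) = 1" if "x \<in> carrier G" for x
    using mult[of x "inv x"] that by simp
  have "e c = 1"
  proof -
    obtain k1 k2 where k: "k1 \<in> carrier G" "k2 \<in> carrier G"
      and c: "c = k1 \<otimes> k2 \<otimes> inv k1 \<otimes> inv k2"
      using c by blast
    then have "e c = (e k1 * e (inv k1)) * (e k2 * e (inv k2))"
      by (simp add: mult ac_simps)
    with inv k show ?thesis by simp
  qed
  moreover have "c \<in> carrier G"
    using c derived_set_in_carrier[of "carrier G"] by blast
  ultimately show ?thesis
    using y square by (simp add: mult)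
qed

definition M2 :: "complex \<Rightarrow> complex \<Rightarrow> complex \<Rightarrow> complex \<Rightarrow> cmat2" where
  "M2 a b c d = (\<chi> i j. if i = 1 then (if j = 1 then a else b) else (if j = 1 then c else d))"

lemma M2_nth [simp]:
  "M2 a b c d $ 1 $ 1 = a" "M2 a b c d $ 1 $ 2 = b" "M2 a b c d $ 2 $ 1 = c" "M2 a b c d $ 2 $ 2 = d"
  by (simp_all add: M2_def)

lemma cmat2_eqI: "(\<And>i j. (A::cmat2) $ i $ j = B $ i $ j) \<Longrightarrow> A = B"
  by (simp add: vec_eq_iff)

lemma M2_entries: "A = M2 (A$1$1) (A$1$2) (A$2$1) (A$2$2)"
proof (rule cmat2_eqI)
  fix i j :: 2
  show "A $ i $ j = M2 (A$1$1) (A$1$2) (A$2$1) (A$2$2) $ i $ j"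
    using exhaust_2[of i] exhaust_2[of j] by auto
qed

lemma M2_cases: obtains a b c d where "A = M2 a b c d"
  using M2_entries by blast

lemma M2_eq_iff [simp]: "M2 a b c d = M2 a' b' c' d' \<longleftrightarrow> a = a' \<and> b = b' \<and> c = c' \<and> d = d'"
  by (metis M2_nth)

lemma M2_mult [simp]: "M2 a b c d ** M2 e f g h = M2 (a*e+b*g) (a*f+b*h) (c*e+d*g) (c*f+d*h)"
proof (rule cmat2_eqI)
  fix i j :: 2
  show "(M2 a b c d ** M2 e f g h) $ i $ j = M2 (a*e+b*g) (a*f+b*h) (c*e+d*g) (c*f+d*h) $ i $ j"
    using exhaust_2[of i] exhaust_2[of j] by (auto simp: matrix_matrix_mult_def sum_2)
qed

lemma cadj_M2 [simp]: "cadj (M2 a b c d) = M2 (cnj a) (cnj c) (cnj b) (cnj d)"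
proof (rule cmat2_eqI)
  fix i j :: 2
  show "cadj (M2 a b c d) $ i $ j = M2 (cnj a) (cnj c) (cnj b) (cnj d) $ i $ j"
    using exhaust_2[of i] exhaust_2[of j] by (auto simp: cadj_def)
qed

lemma det_M2 [simp]: "det (M2 a b c d) = a * d - b * c"
  by (simp add: det_2)

lemma mat_eq_M2: "mat z = M2 z 0 0 z"
proof (rule cmat2_eqI)
  fix i j :: 2
  show "mat z $ i $ j = M2 z 0 0 z $ i $ j"
    using exhaust_2[of i] exhaust_2[of j] by (auto simp: mat_def)
qed

lemma cadj_mult: "cadj (A ** B) = cadj B ** cadj A" for A B :: cmat2
  by (cases A rule: M2_cases, cases B rule: M2_cases) (simp add: algebra_simps)

lemma cadj_cadj [simp]: "cadj (cadj A) = A"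
  by (cases A rule: M2_cases) simp

lemma cadj_mat [simp]: "cadj (mat z) = mat (cnj z)"
  by (simp add: mat_eq_M2)

lemma det_cadj: "det (cadj A) = cnj (det A)"
  by (cases A rule: M2_cases) simp

lemma mat_mult_mat [simp]: "(mat z :: cmat2) ** mat w = mat (z * w)"
  by (simp add: mat_eq_M2)

lemma mat_eq_iff [simp]: "(mat z :: cmat2) = mat w \<longleftrightarrow> z = w"
  by (simp add: mat_eq_M2)

lemma mat_mult_commute: "mat z ** A = A ** (mat z :: cmat2)" for A :: cmat2
  by (cases A rule: M2_cases) (simp add: mat_eq_M2 mult.commute)

lemma det_mat_mult: "det (mat z ** A) = z\<^sup>2 * det (A :: cmat2)"
  by (cases A rule: M2_cases) (simp add: mat_eq_M2 power2_eq_square algebra_simps)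

lemma U2_right_inverse: "A \<in> U2_set \<Longrightarrow> A ** cadj A = mat 1"
  by (simp add: U2_set_def matrix_left_right_inverse)

lemma U2_cancel_cadj_right: "A \<in> U2_set \<Longrightarrow> B ** A ** cadj A = B"
  by (simp add: U2_right_inverse flip: matrix_mul_assoc)

lemma U2_cadj: "A \<in> U2_set \<Longrightarrow> cadj A \<in> U2_set"
  by (simp add: U2_set_def U2_right_inverse)

lemma U2_mult: "A \<in> U2_set \<Longrightarrow> B \<in> U2_set \<Longrightarrow> A ** B \<in> U2_set"
  by (simp add: U2_set_def cadj_mult matrix_mul_assoc flip: matrix_mul_assoc[of "cadj B"])

lemma U2_one: "mat 1 \<in> U2_set"
  by (simp add: U2_set_def)

lemma U2_det: "A \<in> U2_set \<Longrightarrow> cnj (det A) * det A = 1"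
  using det_mul[of "cadj A" A] by (simp add: U2_set_def det_cadj)

lemma U1_set_iff: "z \<in> U1_set \<longleftrightarrow> cnj z * z = 1"
proof -
  have "cnj z * z = complex_of_real ((norm z)\<^sup>2)"
    by (simp add: complex_norm_square mult.commute del: of_real_power)
  then have "cnj z * z = 1 \<longleftrightarrow> (norm z)\<^sup>2 = 1"
    by (simp del: of_real_power)
  then show ?thesis
    using norm_ge_zero[of z] by (auto simp: U1_set_def power2_eq_1_iff)
qed

lemma mat_in_U2 [simp]: "mat z \<in> U2_set \<longleftrightarrow> z \<in> U1_set"
  by (simp add: U2_set_def mat_eq_M2 U1_set_iff)

lemma U1_one [simp]: "1 \<in> U1_set"
  by (simp add: U1_set_def)

lemma SU2_M2: "cnj a * a + cnj b * b = 1 \<Longrightarrow> M2 a (- cnj b) b (cnj a) \<in> SU2_set"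
  by (simp add: SU2_set_def U2_set_def mat_eq_M2 mult.commute add.commute)

lemma SU2_cases:
  assumes "A \<in> SU2_set"
  obtains a b where "A = M2 a (- cnj b) b (cnj a)" "cnj a * a + cnj b * b = 1"
proof -
  obtain a p b q where A: "A = M2 a p b q" by (rule M2_cases)
  have unitary: "cadj A ** A = mat 1" and det: "a * q - p * b = 1"
    using assms A by (auto simp: SU2_set_def U2_set_def)
  have "A ** M2 q (- p) (- b) a = mat 1"
    using det by (simp add: A mat_eq_M2 algebra_simps)
  then have "cadj A = M2 q (- p) (- b) a"
    using unitary by (metis matrix_mul_assoc matrix_mul_lid matrix_mul_rid)
  then have "q = cnj a" "p = - cnj b"
    by (simp_all add: A)
  with A unitary that show thesis
    by (simp add: mat_eq_M2)
qed

lemma SU2_U2: "A \<in> SU2_set \<Longrightarrow> A \<in> U2_set"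
  by (simp add: SU2_set_def)

lemma SU2_cadj: "A \<in> SU2_set \<Longrightarrow> cadj A \<in> SU2_set"
  by (simp add: SU2_set_def U2_cadj det_cadj)

lemma SU2_mult: "A \<in> SU2_set \<Longrightarrow> B \<in> SU2_set \<Longrightarrow> A ** B \<in> SU2_set"
  by (simp add: SU2_set_def U2_mult det_mul)

lemma SU2_one: "mat 1 \<in> SU2_set"
  by (simp add: SU2_set_def U2_one)

lemma carrier_U2_grp [simp]: "carrier U2_grp = U2_set"
  and mult_U2_grp [simp]: "A \<otimes>\<^bsub>U2_grp\<^esub> B = A ** B"
  and carrier_SU2_grp [simp]: "carrier SU2_grp = SU2_set"
  and mult_SU2_grp [simp]: "A \<otimes>\<^bsub>SU2_grp\<^esub> B = A ** B"
  and carrier_U1_grp [simp]: "carrier U1_grp = U1_set"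
  and mult_U1_grp [simp]: "z \<otimes>\<^bsub>U1_grp\<^esub> w = z * w"
  and one_U1_grp [simp]: "\<one>\<^bsub>U1_grp\<^esub> = 1"
  by (simp_all add: U2_grp_def SU2_grp_def U1_grp_def)

lemma group_U2: "group U2_grp"
proof (rule groupI)
  show "\<exists>B \<in> carrier U2_grp. B \<otimes>\<^bsub>U2_grp\<^esub> A = \<one>\<^bsub>U2_grp\<^esub>" if "A \<in> carrier U2_grp" for A
  proof
    show "cadj A \<otimes>\<^bsub>U2_grp\<^esub> A = \<one>\<^bsub>U2_grp\<^esub>" "cadj A \<in> carrier U2_grp"
      using that U2_cadj by (auto simp: U2_grp_def U2_set_def)
  qed
qed (auto simp: U2_grp_def U2_mult U2_one matrix_mul_assoc)

lemma inv_U2: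
  assumes "A \<in> U2_set" shows "inv\<^bsub>U2_grp\<^esub> A = cadj A"
proof (rule group.inv_equality[OF group_U2])
  show "cadj A \<otimes>\<^bsub>U2_grp\<^esub> A = \<one>\<^bsub>U2_grp\<^esub>"
    using assms by (simp add: U2_grp_def U2_set_def)
qed (use assms U2_cadj in \<open>auto simp: U2_grp_def\<close>)

lemma SU2_grp_eq: "SU2_grp = U2_grp\<lparr>carrier := SU2_set\<rparr>"
  by (simp add: SU2_grp_def U2_grp_def)

lemma subgroup_SU2: "subgroup SU2_set U2_grp"
proof (rule group.subgroupI[OF group_U2])
  show "SU2_set \<noteq> {}"
    using SU2_one by blast
  show "inv\<^bsub>U2_grp\<^esub> A \<in> SU2_set" if "A \<in> SU2_set" for A
    using that by (simp add: inv_U2 SU2_U2 SU2_cadj)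
qed (auto simp: U2_grp_def SU2_U2 SU2_mult)

lemma group_SU2: "group SU2_grp"
  unfolding SU2_grp_eq by (rule subgroup.subgroup_is_group[OF subgroup_SU2 group_U2])

lemma inv_SU2: "A \<in> SU2_set \<Longrightarrow> inv\<^bsub>SU2_grp\<^esub> A = cadj A"
  by (rule group.inv_equality[OF group_SU2])
    (auto simp: SU2_grp_def SU2_cadj U2_set_def dest: SU2_U2)

lemma group_U1: "group U1_grp"
proof (rule groupI)
  show "\<exists>w \<in> carrier U1_grp. w \<otimes>\<^bsub>U1_grp\<^esub> z = \<one>\<^bsub>U1_grp\<^esub>" if "z \<in> carrier U1_grp" for z
  proof
    show "cnj z \<otimes>\<^bsub>U1_grp\<^esub> z = \<one>\<^bsub>U1_grp\<^esub>" "cnj z \<in> carrier U1_grp"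
      using that by (simp_all add: U1_grp_def U1_set_iff mult.commute)
  qed
qed (auto simp: U1_grp_def U1_set_def norm_mult)

lemma carrier_U1xSU2 [simp]: "carrier U1xSU2 = U1_set \<times> SU2_set"
  by (simp add: U1xSU2_def)

lemma mult_U1xSU2: "p \<otimes>\<^bsub>U1xSU2\<^esub> q = (fst p * fst q, snd p ** snd q)"
  by (simp add: U1xSU2_def mult_DirProd')

lemma group_U1xSU2: "group U1xSU2"
  unfolding U1xSU2_def by (rule DirProd_group[OF group_U1 group_SU2])

subsection \<open>Every element of SU(2) is a commutator\<close>

lemma eigenvector_diagonalizes_SU2:
  assumes "a * x - cnj b * y = l * x" and "b * x + cnj a * y = l * y"
  shows "M2 a (- cnj b) b (cnj a) ** M2 x (- cnj y) y (cnj x)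
       = M2 x (- cnj y) y (cnj x) ** M2 l 0 0 (cnj l)"
proof -
  have "cnj a * cnj x - b * cnj y = cnj l * cnj x" "cnj b * cnj x + a * cnj y = cnj l * cnj y"
    using arg_cong[OF assms(1), of cnj] arg_cong[OF assms(2), of cnj] by simp_all
  with assms show ?thesis
    by (simp add: algebra_simps)
qed

lemma SU2_unit_eigenvector:
  assumes ab: "cnj a * a + cnj b * b = 1"
  obtains x y l where "cnj x * x + cnj y * y = 1"
    and "a * x - cnj b * y = l * x" and "b * x + cnj a * y = l * y"
proof (cases "b = 0")
  case True
  with ab that[of 1 0 a] show thesis by simp
next
  case False
  define t where "t = a + cnj a"
  define l where "l = (t + csqrt (t\<^sup>2 - 4)) / 2"
  \<comment> \<open>a root of the characteristic polynomial \<open>X\<^sup>2 - t X + 1\<close>\<close>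
  have char: "l\<^sup>2 + 1 = t * l"
    unfolding l_def by (simp add: power2_eq_square field_simps) (simp flip: power2_eq_square)
  define r where "r = sqrt ((norm b)\<^sup>2 + (norm (a - l))\<^sup>2)"
  have "r > 0"
    using False by (simp add: r_def add_pos_nonneg)
  have "cnj b * b + cnj (a - l) * (a - l) = complex_of_real (r\<^sup>2)"
    by (simp add: r_def complex_norm_square mult.commute del: of_real_power)
  then have unit: "cnj (cnj b / r) * (cnj b / r) + cnj ((a - l) / r) * ((a - l) / r) = 1"
    using \<open>r > 0\<close> by (simp add: field_simps power2_eq_square)
  have "b * cnj b + cnj a * (a - l) = l * (a - l)"
    using ab char by (simp add: t_def power2_eq_square algebra_simps)
  then have "b * (cnj b / r) + cnj a * ((a - l) / r) = l * ((a - l) / r)"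
    by (simp only: times_divide_eq_right flip: add_divide_distrib)
  moreover have "a * (cnj b / r) - cnj b * ((a - l) / r) = l * (cnj b / r)"
    by (simp add: diff_divide_distrib algebra_simps)
  ultimately show thesis
    using that unit by blast
qed

lemma SU2_diagonalizable:
  assumes "A \<in> SU2_set"
  obtains U l where "U \<in> SU2_set" and "cnj l * l = 1" and "A = U ** M2 l 0 0 (cnj l) ** cadj U"
proof -
  obtain a b where A: "A = M2 a (- cnj b) b (cnj a)" and ab: "cnj a * a + cnj b * b = 1"
    using assms by (rule SU2_cases)
  obtain x y l where xy: "cnj x * x + cnj y * y = 1"
    and eigen: "a * x - cnj b * y = l * x" "b * x + cnj a * y = l * y"
    using ab by (rule SU2_unit_eigenvector)
  define U where "U = M2 x (- cnj y) y (cnj x)"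
  have U: "U \<in> SU2_set"
    unfolding U_def using xy by (rule SU2_M2)
  have AU: "A ** U = U ** M2 l 0 0 (cnj l)"
    unfolding A U_def using eigen by (rule eigenvector_diagonalizes_SU2)
  then have diag: "A = U ** M2 l 0 0 (cnj l) ** cadj U"
    using U2_cancel_cadj_right[OF SU2_U2[OF U], of A] by simp
  have "cadj U ** A ** U = cadj U ** U ** M2 l 0 0 (cnj l)"
    by (simp add: AU flip: matrix_mul_assoc)
  then have "M2 l 0 0 (cnj l) = cadj U ** A ** U"
    using U by (simp add: SU2_set_def U2_set_def)
  then have "M2 l 0 0 (cnj l) \<in> SU2_set"
    using U assms by (simp add: SU2_mult SU2_cadj)
  then have "cnj l * l = 1"
    by (simp add: SU2_set_def mult.commute)
  with U diag that show thesis by blast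
qed

lemma diagonal_SU2_commutator:
  assumes "cnj l * l = 1"
  shows "\<exists>D \<in> SU2_set. \<exists>S \<in> SU2_set. M2 l 0 0 (cnj l) = D ** S ** cadj D ** cadj S"
proof -
  define m where "m = csqrt l"
  have "m * m = l"
    unfolding m_def by (metis power2_csqrt power2_eq_square)
  have "norm m = 1"
    using assms by (simp add: m_def flip: U1_set_iff) (simp add: U1_set_def)
  then have D: "M2 m 0 0 (cnj m) \<in> SU2_set"
    using SU2_M2[of m 0] by (simp add: U1_set_def flip: U1_set_iff)
  have S: "M2 0 (-1) 1 0 \<in> SU2_set"
    using SU2_M2[of 0 1] by simp
  have "M2 l 0 0 (cnj l)
      = M2 m 0 0 (cnj m) ** M2 0 (-1) 1 0 ** cadj (M2 m 0 0 (cnj m)) ** cadj (M2 0 (-1) 1 0)"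
    by (simp flip: \<open>m * m = l\<close>)
  with D S show ?thesis
    by blast
qed

theorem SU2_commutator:
  assumes "A \<in> SU2_set"
  shows "\<exists>V \<in> SU2_set. \<exists>W \<in> SU2_set. A = V ** W ** cadj V ** cadj W"
proof -
  obtain U l where U: "U \<in> SU2_set" and l: "cnj l * l = 1"
    and A: "A = U ** M2 l 0 0 (cnj l) ** cadj U"
    using assms by (rule SU2_diagonalizable)
  obtain D S where DS: "D \<in> SU2_set" "S \<in> SU2_set"
    and diag: "M2 l 0 0 (cnj l) = D ** S ** cadj D ** cadj S"
    using diagonal_SU2_commutator[OF l] by blast
  define V W where "V = U ** D ** cadj U" and "W = U ** S ** cadj U"
  have unitary: "cadj U ** U = mat 1"
    using U by (simp add: SU2_set_def U2_set_def)
  have "V ** W ** cadj V ** cadj W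
      = U ** D ** (cadj U ** U) ** S ** (cadj U ** U) ** cadj D ** (cadj U ** U) ** cadj S ** cadj U"
    by (simp add: V_def W_def cadj_mult matrix_mul_assoc)
  also have "\<dots> = U ** M2 l 0 0 (cnj l) ** cadj U"
    by (simp add: unitary diag matrix_mul_assoc)
  finally have "A = V ** W ** cadj V ** cadj W"
    by (simp add: A)
  moreover have "V \<in> SU2_set" "W \<in> SU2_set"
    using U DS by (simp_all add: V_def W_def SU2_mult SU2_cadj)
  ultimately show ?thesis by blast
qed

lemma derived_set_U2: "derived_set U2_grp U2_set = SU2_set"
proof
  show "derived_set U2_grp U2_set \<subseteq> SU2_set"
  proof clarify
    fix V W assume V: "V \<in> U2_set" and W: "W \<in> U2_set"
    have "det (V ** W ** cadj V ** cadj W) = (cnj (det V) * det V) * (cnj (det W) * det W)"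
      by (simp add: det_mul det_cadj algebra_simps)
    then show "V \<otimes>\<^bsub>U2_grp\<^esub> W \<otimes>\<^bsub>U2_grp\<^esub> inv\<^bsub>U2_grp\<^esub> V \<otimes>\<^bsub>U2_grp\<^esub> inv\<^bsub>U2_grp\<^esub> W \<in> SU2_set"
      using V W by (simp add: inv_U2 SU2_set_def U2_det U2_mult U2_cadj)
  qed
  show "SU2_set \<subseteq> derived_set U2_grp U2_set"
  proof
    fix A assume "A \<in> SU2_set"
    then obtain V W where "V \<in> SU2_set" "W \<in> SU2_set" "A = V ** W ** cadj V ** cadj W"
      using SU2_commutator by blast
    then have "V \<in> U2_set" "W \<in> U2_set"
      and "A = V \<otimes>\<^bsub>U2_grp\<^esub> W \<otimes>\<^bsub>U2_grp\<^esub> inv\<^bsub>U2_grp\<^esub> V \<otimes>\<^bsub>U2_grp\<^esub> inv\<^bsub>U2_grp\<^esub> W"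
      by (simp_all add: inv_U2 SU2_U2)
    then show "A \<in> derived_set U2_grp U2_set"
      by blast
  qed
qed

lemma SU2_subset_derived_set_SU2: "SU2_set \<subseteq> derived_set SU2_grp (carrier SU2_grp)"
proof
  fix A assume "A \<in> SU2_set"
  then obtain V W where "V \<in> SU2_set" "W \<in> SU2_set" "A = V ** W ** cadj V ** cadj W"
    using SU2_commutator by blast
  then have "A = V \<otimes>\<^bsub>SU2_grp\<^esub> W \<otimes>\<^bsub>SU2_grp\<^esub> inv\<^bsub>SU2_grp\<^esub> V \<otimes>\<^bsub>SU2_grp\<^esub> inv\<^bsub>SU2_grp\<^esub> W"
    by (simp add: inv_SU2)
  with \<open>V \<in> SU2_set\<close> \<open>W \<in> SU2_set\<close> show "A \<in> derived_set SU2_grp (carrier SU2_grp)"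
    unfolding carrier_SU2_grp by blast
qed

subsection \<open>The centre of U(2)\<close>

lemma center_U2: "center U2_grp = mat ` U1_set"
proof
  show "mat ` U1_set \<subseteq> center U2_grp"
    by (auto simp: center_def mat_mult_commute)
  show "center U2_grp \<subseteq> mat ` U1_set"
  proof
    fix M assume M: "M \<in> center U2_grp"
    obtain a b c d where M2: "M = M2 a b c d" by (rule M2_cases)
    have "M2 1 0 0 \<i> \<in> U2_set" "M2 0 1 1 0 \<in> U2_set"
      by (simp_all add: U2_set_def mat_eq_M2)
    then have "M ** M2 1 0 0 \<i> = M2 1 0 0 \<i> ** M" "M ** M2 0 1 1 0 = M2 0 1 1 0 ** M"
      using M by (auto simp: center_def)
    then have "M2 a (b * \<i>) c (d * \<i>) = M2 a b (\<i> * c) (\<i> * d)" "M2 b a d c = M2 c d a b"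
      by (simp_all add: M2 del: M2_eq_iff)
    then have "b * \<i> = b" "c = \<i> * c" "d = a"
      unfolding M2_eq_iff by blast+
    then have "M = mat a"
      by (simp add: M2 mat_eq_M2)
    moreover have "a \<in> U1_set"
      using M \<open>M = mat a\<close> by (simp add: center_def)
    ultimately show "M \<in> mat ` U1_set" by blast
  qed
qed

subsection \<open>Automorphisms of U(2)\<close>

lemma mat_iso_center_U2: "mat \<in> iso U1_grp (U2_grp\<lparr>carrier := center U2_grp\<rparr>)"
proof (rule isoI)
  show "mat \<in> hom U1_grp (U2_grp\<lparr>carrier := center U2_grp\<rparr>)"
    by (rule homI) (simp_all add: center_U2)
  show "bij_betw mat (carrier U1_grp) (carrier (U2_grp\<lparr>carrier := center U2_grp\<rparr>))"
    by (simp add: center_U2 bij_betw_imageI inj_on_def)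
qed

lemma U2_automorphism_on_scalars:
  assumes "\<tau> \<in> iso U2_grp U2_grp"
  obtains w where "w \<in> iso U1_grp U1_grp" and "\<And>z. z \<in> U1_set \<Longrightarrow> \<tau> (mat z) = mat (w z)"
proof -
  let ?Z = "U2_grp\<lparr>carrier := center U2_grp\<rparr>"
  have "\<tau> ` center U2_grp = center U2_grp"
    using monoid.iso_image_center[OF group.is_monoid[OF group_U2] assms] .
  then have "\<tau> \<in> iso ?Z ?Z"
    using assms by (rule iso_restrict_invariant[rotated 2]) (auto simp: center_def)
  moreover have "inv_into U1_set mat \<in> iso ?Z U1_grp"
    using group.iso_set_sym[OF group_U1 mat_iso_center_U2] by simp
  ultimately have "inv_into U1_set mat \<circ> (\<tau> \<circ> mat) \<in> iso U1_grp U1_grp"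
    by (intro iso_set_trans[OF iso_set_trans[OF mat_iso_center_U2]])
  moreover have "\<tau> (mat z) = mat ((inv_into U1_set mat \<circ> (\<tau> \<circ> mat)) z)" if "z \<in> U1_set" for z
  proof -
    have "\<tau> (mat z) \<in> mat ` U1_set"
      using that \<open>\<tau> ` center U2_grp = center U2_grp\<close> by (force simp: center_U2)
    then show ?thesis
      by (simp add: f_inv_into_f)
  qed
  ultimately show thesis
    using that by blast
qed

lemma U2_automorphism_restricts_to_SU2:
  assumes "\<tau> \<in> iso U2_grp U2_grp"
  shows "\<tau> \<in> iso SU2_grp SU2_grp"
proof -
  interpret group_hom U2_grp U2_grp \<tau>
    using assms by (simp add: group_hom_def group_hom_axioms_def group_U2 iso_imp_homomorphism)
  have onto: "\<tau> ` U2_set = U2_set"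
    using assms unfolding iso_def bij_betw_def by simp
  have "\<tau> ` SU2_set = SU2_set"
    using image_derived_set[of U2_set] unfolding onto derived_set_U2 by simp
  then show ?thesis
    unfolding SU2_grp_eq using assms by (rule iso_restrict_invariant[rotated 2]) (auto dest: SU2_U2)
qed

subsection \<open>Lifting along the covering map\<close>

lemma det_rho_hat: "p \<in> carrier U1xSU2 \<Longrightarrow> det (rho_hat p) = (fst p)\<^sup>2"
  by (auto simp: rho_hat_def det_mat_mult SU2_set_def)

lemma rho_hat_cancel:
  assumes "rho_hat (z, A) = rho_hat (z, B)" and "z \<noteq> 0"
  shows "A = B"
proof -
  have "mat (inverse z) ** (mat z ** A) = mat (inverse z) ** (mat z ** B)"
    using assms(1) by (simp add: rho_hat_def)
  then show ?thesis
    using assms(2) by (simp add: matrix_mul_assoc)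
qed

lemma U1xSU2_square_mult_commutator:
  assumes "p \<in> carrier U1xSU2"
  obtains y c where "y \<in> carrier U1xSU2" and "c \<in> derived_set U1xSU2 (carrier U1xSU2)"
    and "p = y \<otimes>\<^bsub>U1xSU2\<^esub> y \<otimes>\<^bsub>U1xSU2\<^esub> c"
proof -
  obtain z A where p: "p = (z, A)" and z: "z \<in> U1_set" and A: "A \<in> SU2_set"
    using assms by auto
  have "(1, A) \<in> {\<one>\<^bsub>U1_grp\<^esub>} \<times> derived_set SU2_grp (carrier SU2_grp)"
    unfolding one_U1_grp using subsetD[OF SU2_subset_derived_set_SU2] A by blast
  then have c: "(1, A) \<in> derived_set U1xSU2 (carrier U1xSU2)"
    unfolding U1xSU2_def by (rule subsetD[OF DirProd_derived_set[OF group_U1 group_SU2]])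
  have y: "(csqrt z, mat 1) \<in> carrier U1xSU2"
    using z by (simp add: U1_set_def SU2_one)
  have "csqrt z * csqrt z = z"
    using power2_csqrt[of z] by (simp only: power2_eq_square)
  then have "p = (csqrt z, mat 1) \<otimes>\<^bsub>U1xSU2\<^esub> (csqrt z, mat 1) \<otimes>\<^bsub>U1xSU2\<^esub> (1, A)"
    by (simp add: p mult_U1xSU2)
  with y c show thesis
    by (rule that)
qed

lemma rho_hat_lift_unique:
  assumes \<sigma>: "\<sigma> \<in> hom U1xSU2 U1xSU2" and \<sigma>': "\<sigma>' \<in> hom U1xSU2 U1xSU2"
    and lift: "\<And>q. q \<in> carrier U1xSU2 \<Longrightarrow> rho_hat (\<sigma> q) = rho_hat (\<sigma>' q)"
    and p: "p \<in> carrier U1xSU2"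
  shows "\<sigma> p = \<sigma>' p"
proof -
  define e where "e q = fst (\<sigma> q) / fst (\<sigma>' q)" for q
  have nonzero: "fst (\<sigma>' q) \<noteq> 0" if "q \<in> carrier U1xSU2" for q
    using hom_in_carrier[OF \<sigma>' that] by (auto simp: U1_set_def)
  have mult: "e (x \<otimes>\<^bsub>U1xSU2\<^esub> y) = e x * e y"
    if "x \<in> carrier U1xSU2" "y \<in> carrier U1xSU2" for x y
    using hom_mult[OF \<sigma> that] hom_mult[OF \<sigma>' that]
    by (simp add: e_def mult_U1xSU2 times_divide_times_eq)
  have square: "e q * e q = 1" if q: "q \<in> carrier U1xSU2" for q
  proof -
    have "(fst (\<sigma> q))\<^sup>2 = (fst (\<sigma>' q))\<^sup>2"
      using lift[OF q] det_rho_hat[OF hom_in_carrier[OF \<sigma> q]] det_rho_hat[OF hom_in_carrier[OF \<sigma>' q]]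
      by simp
    then show ?thesis
      using nonzero[OF q] by (simp add: e_def field_simps power2_eq_square)
  qed
  obtain y c where y: "y \<in> carrier U1xSU2" and c: "c \<in> derived_set U1xSU2 (carrier U1xSU2)"
    and p_eq: "p = y \<otimes>\<^bsub>U1xSU2\<^esub> y \<otimes>\<^bsub>U1xSU2\<^esub> c"
    using p by (rule U1xSU2_square_mult_commutator)
  have "e p = 1"
    using group.involutive_character_trivial[OF group_U1xSU2, where e = e, OF mult square y c]
    by (simp only: p_eq)
  then have fst_eq: "fst (\<sigma> p) = fst (\<sigma>' p)"
    using nonzero[OF p] by (simp add: e_def)
  then have "rho_hat (fst (\<sigma>' p), snd (\<sigma> p)) = rho_hat (fst (\<sigma>' p), snd (\<sigma>' p))"
    using lift[OF p] by (simp add: rho_hat_def)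
  then have "snd (\<sigma> p) = snd (\<sigma>' p)"
    using nonzero[OF p] by (rule rho_hat_cancel)
  with fst_eq show ?thesis
    by (simp add: prod_eq_iff)
qed

lemma rho_hat_map_prod:
  assumes "\<tau> \<in> hom U2_grp U2_grp" and scalar: "\<And>z. z \<in> U1_set \<Longrightarrow> \<tau> (mat z) = mat (w z)"
    and "p \<in> carrier U1xSU2"
  shows "rho_hat (map_prod w \<tau> p) = \<tau> (rho_hat p)"
proof -
  obtain z A where p: "p = (z, A)" and z: "z \<in> U1_set" and A: "A \<in> SU2_set"
    using assms(3) by auto
  have "rho_hat (map_prod w \<tau> p) = \<tau> (mat z) ** \<tau> A"
    by (simp add: p z rho_hat_def scalar)
  also have "\<dots> = \<tau> (rho_hat p)"
    using hom_mult[OF assms(1), of "mat z" A] z A by (simp add: p rho_hat_def SU2_U2)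
  finally show ?thesis .
qed

theorem mainTheorem13:
  assumes "\<tau> \<in> iso U2_grp U2_grp"
  shows "\<exists>\<tau>'. \<tau>' \<in> iso U1xSU2 U1xSU2
              \<and> (\<forall>p \<in> carrier U1xSU2. rho_hat (\<tau>' p) = \<tau> (rho_hat p))
              \<and> (\<forall>\<sigma>. \<sigma> \<in> iso U1xSU2 U1xSU2
                     \<and> (\<forall>p \<in> carrier U1xSU2. rho_hat (\<sigma> p) = \<tau> (rho_hat p))
                     \<longrightarrow> (\<forall>p \<in> carrier U1xSU2. \<sigma> p = \<tau>' p))"
proof -
  obtain w where w: "w \<in> iso U1_grp U1_grp" and scalar: "\<And>z. z \<in> U1_set \<Longrightarrow> \<tau> (mat z) = mat (w z)"
    using U2_automorphism_on_scalars[OF assms] by blast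
  define \<tau>' where "\<tau>' = map_prod w \<tau>"
  have iso: "\<tau>' \<in> iso U1xSU2 U1xSU2"
    unfolding \<tau>'_def U1xSU2_def using w U2_automorphism_restricts_to_SU2[OF assms] by (rule DirProd_iso)
  have lift: "\<forall>p \<in> carrier U1xSU2. rho_hat (\<tau>' p) = \<tau> (rho_hat p)"
    unfolding \<tau>'_def using iso_imp_homomorphism[OF assms] scalar by (blast intro: rho_hat_map_prod)
  have "\<forall>p \<in> carrier U1xSU2. \<sigma> p = \<tau>' p"
    if "\<sigma> \<in> iso U1xSU2 U1xSU2" and "\<forall>p \<in> carrier U1xSU2. rho_hat (\<sigma> p) = \<tau> (rho_hat p)" for \<sigma>
    using that iso lift by (intro ballI rho_hat_lift_unique) (auto simp: iso_imp_homomorphism)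
  with iso lift show ?thesis
    by blast
qed

end
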